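(* Let $\mathcal{C}\subseteq\mathbb{F}_q^n$ be a code with $(r,\delta)$-locality. Let $\mathcal{S}\subseteq[n]$ and let $\Delta$ be a positive integer with $\Delta\le|\mathcal{S}|$. Then there exist subsets $\mathcal{A},\mathcal{T}\subseteq[n]$ such that $$\mathcal{A}\subseteq\mathcal{S}\cap\mathcal{T},\qquad |\mathcal{A}|=(\delta-1)\left\lfloor\frac{\Delta}{r+\delta-1}\right\rfloor,\qquad |\mathcal{S}\cap\mathcal{T}|\le\Delta,$$ and $\mathcal{C}|_{\mathcal{T}}$ is generated by $\mathcal{C}|_{\mathcal{T}\setminus\mathcal{A}}$, i.e., there is a map $\psi$ with $c|_{\mathcal{T}}=\psi(c|_{\mathcal{T}\setminus\mathcal{A}})$ for every $c\in\mathcal{C}$.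
   Context: $[n]=\{1,\dots,n\}$; for $\mathcal{X}\subseteq[n]$, $c|_{\mathcal{X}}$ is the restriction of $c$ to coordinates in $\mathcal{X}$ and $\mathcal{C}|_{\mathcal{X}}=\{c|_{\mathcal{X}}:c\in\mathcal{C}\}$. A code $\mathcal{C}\subseteq\mathbb{F}_q^n$ has $(r,\delta)$-locality (with $r\ge1$, $\delta\ge 2$) if every coordinate $i\in[n]$ lies in a subset $J_i\subseteq[n]$ with $|J_i|\le r+\delta-1$ such that $\mathcal{C}|_{J_i}$ has minimum distance at least $\delta$. *)

theory Defs
  imports "HOL-Library.FuncSet"
begin

text \<open>Words of length n over the alphabet 'a are functions nat => 'a that are
extensional on the coordinate set [n] = {1..n}. A code is a set of such words.
The restriction c|_X is restrict c X.\<close>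

definition is_code :: "nat \<Rightarrow> (nat \<Rightarrow> 'a) set \<Rightarrow> bool" where
  "is_code n C \<longleftrightarrow> C \<subseteq> ({1..n} \<rightarrow>\<^sub>E (UNIV :: 'a set))"

definition restr_code :: "(nat \<Rightarrow> 'a) set \<Rightarrow> nat set \<Rightarrow> (nat \<Rightarrow> 'a) set" where
  "restr_code C X = (\<lambda>c. restrict c X) ` C"

definition hdist_on :: "nat set \<Rightarrow> (nat \<Rightarrow> 'a) \<Rightarrow> (nat \<Rightarrow> 'a) \<Rightarrow> nat" where
  "hdist_on X x y = card {i \<in> X. x i \<noteq> y i}"

definition min_dist_ge :: "nat set \<Rightarrow> (nat \<Rightarrow> 'a) set \<Rightarrow> nat \<Rightarrow> bool" where
  "min_dist_ge X D d \<longleftrightarrow> (\<forall>x\<in>D. \<forall>y\<in>D. x \<noteq> y \<longrightarrow> d \<le> hdist_on X x y)"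

definition has_locality :: "nat \<Rightarrow> (nat \<Rightarrow> 'a) set \<Rightarrow> nat \<Rightarrow> nat \<Rightarrow> bool" where
  "has_locality n C r \<delta> \<longleftrightarrow>
     (\<forall>i\<in>{1..n}. \<exists>J. J \<subseteq> {1..n} \<and> i \<in> J \<and> card J \<le> r + \<delta> - 1 \<and>
        min_dist_ge J (restr_code C J) \<delta>)"

end

theory Submission
  imports Defs
begin

text \<open>As long as \<open>S \<inter> T \<noteq> S\<close>, take a local group \<open>J\<close> through a
point of \<open>S - T\<close> and add it to \<open>T\<close>; up to \<open>\<delta> - 1\<close> new positions of \<open>S \<inter> J\<close> go into \<open>A\<close>,
because the local code on \<open>J\<close> has distance \<open>\<delta>\<close> and so corrects \<open>\<delta> - 1\<close> erasures. A group
that meets \<open>S - T\<close> in fewer than \<open>\<delta> - 1\<close> points puts all of them into \<open>A\<close>; a larger one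
puts exactly \<open>\<delta> - 1\<close> of them into \<open>A\<close> and costs at most \<open>r\<close> further points of \<open>S \<inter> T\<close>.
Hence \<open>|S \<inter> T| \<le> |A| + r \<lfloor>|A| / (\<delta> - 1)\<rfloor>\<close> throughout, and after \<open>(\<delta> - 1) k\<close> points
have entered \<open>A\<close>, where \<open>k = \<lfloor>\<Delta> / (r + \<delta> - 1)\<rfloor>\<close>, we have \<open>|S \<inter> T| \<le> (r + \<delta> - 1) k \<le> \<Delta>\<close>.\<close>

definition determined_by :: "(nat \<Rightarrow> 'a) set \<Rightarrow> nat set \<Rightarrow> nat set \<Rightarrow> bool" where
  "determined_by C X Y \<longleftrightarrow>
     (\<forall>c\<in>C. \<forall>c'\<in>C. (\<forall>i\<in>X. c i = c' i) \<longrightarrow> (\<forall>i\<in>Y. c i = c' i))"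

lemma restrict_eq_iff: "restrict f A = restrict g A \<longleftrightarrow> (\<forall>x\<in>A. f x = g x)"
  by (auto simp: fun_eq_iff)

lemma determined_by_imp_restrict_fun:
  assumes "determined_by C X Y"
  shows "\<exists>\<psi>. \<forall>c\<in>C. restrict c Y = \<psi> (restrict c X)"
proof -
  define \<psi> where "\<psi> x = restrict (SOME c. c \<in> C \<and> restrict c X = x) Y" for x
  have "restrict c Y = \<psi> (restrict c X)" if "c \<in> C" for c
  proof -
    define c' where "c' = (SOME c'. c' \<in> C \<and> restrict c' X = restrict c X)"
    have "c' \<in> C \<and> restrict c' X = restrict c X"
      unfolding c'_def by (rule someI[of _ c]) (simp add: \<open>c \<in> C\<close>)
    then have "restrict c' Y = restrict c Y"
      using assms \<open>c \<in> C\<close> unfolding determined_by_def restrict_eq_iff by blast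
    then show ?thesis unfolding \<psi>_def c'_def[symmetric] by simp
  qed
  then show ?thesis by blast
qed

lemma min_dist_ge_corrects_erasures:
  assumes "min_dist_ge J (restr_code C J) \<delta>" and "finite E" and "card E < \<delta>"
  shows "determined_by C (J - E) J"
  unfolding determined_by_def
proof (intro ballI impI)
  fix c c' j
  assume "c \<in> C" "c' \<in> C" and agree: "\<forall>i\<in>J - E. c i = c' i" and "j \<in> J"
  have "{i \<in> J. restrict c J i \<noteq> restrict c' J i} \<subseteq> E"
    using agree by auto
  then have "card {i \<in> J. restrict c J i \<noteq> restrict c' J i} \<le> card E"
    by (rule card_mono[OF assms(2)])
  then have close: "hdist_on J (restrict c J) (restrict c' J) < \<delta>"
    unfolding hdist_on_def using assms(3) by linarith
  have "restrict c J \<in> restr_code C J" "restrict c' J \<in> restr_code C J"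
    unfolding restr_code_def using \<open>c \<in> C\<close> \<open>c' \<in> C\<close> by auto
  then have "restrict c J = restrict c' J"
    using assms(1) close unfolding min_dist_ge_def by force
  then show "c j = c' j" using \<open>j \<in> J\<close> by (simp add: restrict_eq_iff)
qed

lemma determined_by_extend:
  assumes "determined_by C (T - A) T" and "determined_by C (J - (P \<union> B)) J"
    and "A \<subseteq> T" and "B \<inter> T = {}"
  shows "determined_by C ((T \<union> (J - P)) - (A \<union> B)) (T \<union> (J - P))"
  unfolding determined_by_def
proof (intro ballI impI)
  fix c c' i
  assume "c \<in> C" "c' \<in> C" and agree: "\<forall>j\<in>(T \<union> (J - P)) - (A \<union> B). c j = c' j"
    and "i \<in> T \<union> (J - P)"
  have "T - A \<subseteq> (T \<union> (J - P)) - (A \<union> B)" using assms(4) by blast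
  then have on_T: "\<forall>j\<in>T. c j = c' j"
    using assms(1) \<open>c \<in> C\<close> \<open>c' \<in> C\<close> agree unfolding determined_by_def by blast
  have "J - (P \<union> B) \<subseteq> ((T \<union> (J - P)) - (A \<union> B)) \<union> T" using assms(3) by blast
  then have "\<forall>j\<in>J. c j = c' j"
    using assms(2) \<open>c \<in> C\<close> \<open>c' \<in> C\<close> agree on_T unfolding determined_by_def by blast
  then show "c i = c' i" using on_T \<open>i \<in> T \<union> (J - P)\<close> by blast
qed

lemma greedy_count_step:
  fixes d k r s \<alpha> a p :: nat
  assumes "0 < d" and "\<alpha> < d * k" and "s \<le> r + d"
    and a_def: "a = min (d * k - \<alpha>) (min d s)" and p_def: "p = min (d - a) (s - a)"
  shows "\<alpha> + r * (\<alpha> div d) + (s - p) \<le> (\<alpha> + a) + r * ((\<alpha> + a) div d)"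
proof (cases "s \<le> d")
  case True
  then have "s - p = a" unfolding p_def a_def by auto
  moreover have "\<alpha> div d \<le> (\<alpha> + a) div d" by (simp add: div_le_mono)
  ultimately show ?thesis by simp
next
  case False
  then have a_eq: "a = min (d * k - \<alpha>) d" unfolding a_def by simp
  then have "s - p \<le> r + a" unfolding p_def using False assms(3) by linarith
  moreover have "\<alpha> div d + 1 \<le> (\<alpha> + a) div d"
  proof (cases "a = d")
    case True
    then show ?thesis using assms(1) by (simp add: div_add_self2)
  next
    case False
    then have "\<alpha> + a = d * k" using a_eq assms(2) by linarith
    moreover have "\<alpha> div d < k" using assms(2) by (simp add: less_mult_imp_div_less mult.commute)
    ultimately show ?thesis using assms(1) by simp
  qed
  then have "r * (\<alpha> div d) + r \<le> r * ((\<alpha> + a) div d)"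
    by (metis distrib_left mult.right_neutral mult_le_mono2)
  ultimately show ?thesis by linarith
qed

lemma erasure_choice:
  fixes U :: "'b set" and d k r \<alpha> :: nat
  assumes "finite U" and "U \<noteq> {}" and "card U \<le> r + d" and "0 < d" and "\<alpha> < d * k"
  obtains B P where "B \<subseteq> U" and "P \<subseteq> U - B" and "card P + card B \<le> d"
    and "0 < card B" and "\<alpha> + card B \<le> d * k"
    and "\<alpha> + r * (\<alpha> div d) + (card U - card P) \<le> (\<alpha> + card B) + r * ((\<alpha> + card B) div d)"
proof -
  \<comment> \<open>In the greedy step \<open>B\<close> enters \<open>A\<close> and \<open>P\<close> is left out of \<open>T\<close>, so the local code
    on \<open>U\<close>'s group faces the \<open>\<le> d\<close> erasures \<open>P \<union> B\<close>; \<open>a\<close> is capped so that \<open>|A| \<le> d k\<close>.\<close>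
  define a where "a = min (d * k - \<alpha>) (min d (card U))"
  define p where "p = min (d - a) (card U - a)"
  have "a \<le> card U" unfolding a_def by simp
  then obtain B where BU: "B \<subseteq> U" and card_B: "card B = a"
    by (rule obtain_subset_with_card_n)
  have "card (U - B) = card U - a" using BU card_B assms(1) by (simp add: card_Diff_subset finite_subset)
  then have "p \<le> card (U - B)" unfolding p_def by simp
  then obtain P where PU: "P \<subseteq> U - B" and card_P: "card P = p"
    by (rule obtain_subset_with_card_n)
  have "0 < card U" using assms(1,2) by (simp add: card_gt_0_iff)
  then have "a \<le> d" and "0 < card B" and "\<alpha> + card B \<le> d * k"
    unfolding card_B a_def using assms(4,5) by auto
  moreover from \<open>a \<le> d\<close> have "card P + card B \<le> d"
    unfolding card_P card_B p_def by linarith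
  moreover have "\<alpha> + r * (\<alpha> div d) + (card U - card P) \<le> (\<alpha> + card B) + r * ((\<alpha> + card B) div d)"
    unfolding card_P card_B by (rule greedy_count_step[OF assms(4,5,3) a_def p_def])
  ultimately show thesis using that BU PU by blast
qed

lemma card_Int_Un_Diff:
  assumes "finite T" and "finite J" and "P \<subseteq> S \<inter> J - T"
  shows "card (S \<inter> (T \<union> (J - P))) = card (S \<inter> T) + (card (S \<inter> J - T) - card P)"
proof -
  have split: "S \<inter> (T \<union> (J - P)) = (S \<inter> T) \<union> (S \<inter> J - T - P)" using assms(3) by blast
  have "card (S \<inter> (T \<union> (J - P))) = card (S \<inter> T) + card (S \<inter> J - T - P)"
    unfolding split using assms(1,2) by (intro card_Un_disjoint) auto
  also have "card (S \<inter> J - T - P) = card (S \<inter> J - T) - card P"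
    using assms by (intro card_Diff_subset) (auto intro: finite_subset)
  finally show ?thesis .
qed

locale greedy_erasure =
  fixes n :: nat and C :: "(nat \<Rightarrow> 'a) set" and r \<delta> k :: nat and S :: "nat set"
  assumes locality: "has_locality n C r \<delta>"
    and delta_ge_2: "2 \<le> \<delta>"
    and S_subset: "S \<subseteq> {1..n}"
    and budget: "(r + \<delta> - 1) * k \<le> card S"
begin

definition admissible :: "nat set \<Rightarrow> nat set \<Rightarrow> bool" where
  "admissible A T \<longleftrightarrow> A \<subseteq> S \<inter> T \<and> T \<subseteq> {1..n} \<and> determined_by C (T - A) T \<and>
     card A \<le> (\<delta> - 1) * k \<and> card (S \<inter> T) \<le> card A + r * (card A div (\<delta> - 1))"

lemma admissible_empty: "admissible {} {}"
  unfolding admissible_def determined_by_def by simp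

lemma admissible_not_covering:
  assumes "admissible A T" and "card A < (\<delta> - 1) * k"
  shows "S - T \<noteq> {}"
proof
  assume "S - T = {}"
  then have "card S = card (S \<inter> T)" by (simp add: Int_absorb2 Diff_eq_empty_iff)
  also have "\<dots> \<le> card A + r * (card A div (\<delta> - 1))"
    using assms(1) unfolding admissible_def by blast
  also have "\<dots> < (\<delta> - 1) * k + r * k"
  proof -
    have "card A div (\<delta> - 1) \<le> k"
      using assms(2) by (simp add: less_mult_imp_div_less mult.commute less_imp_le)
    then show ?thesis using assms(2) by (simp add: add_less_le_mono)
  qed
  also have "\<dots> \<le> card S" using budget delta_ge_2 by (simp add: algebra_simps)
  finally show False by simp
qed

lemma admissible_local_group:
  assumes "admissible A T" and "card A < (\<delta> - 1) * k"
  obtains J where "J \<subseteq> {1..n}" and "card J \<le> r + \<delta> - 1"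
    and "min_dist_ge J (restr_code C J) \<delta>" and "S \<inter> J - T \<noteq> {}"
proof -
  obtain x where "x \<in> S" "x \<notin> T" using admissible_not_covering[OF assms] by blast
  moreover from this obtain J where "J \<subseteq> {1..n}" "x \<in> J" "card J \<le> r + \<delta> - 1"
    "min_dist_ge J (restr_code C J) \<delta>"
    using locality S_subset unfolding has_locality_def by blast
  ultimately show thesis using that by blast
qed

lemma admissible_step:
  assumes adm: "admissible A T" and small: "card A < (\<delta> - 1) * k"
  obtains A' T' where "admissible A' T'" and "card A < card A'"
proof -
  have AS: "A \<subseteq> S \<inter> T" and Tn: "T \<subseteq> {1..n}" and det: "determined_by C (T - A) T"
    and count: "card (S \<inter> T) \<le> card A + r * (card A div (\<delta> - 1))"
    using adm unfolding admissible_def by auto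
  obtain J where Jn: "J \<subseteq> {1..n}" and card_J: "card J \<le> r + \<delta> - 1"
    and local_code: "min_dist_ge J (restr_code C J) \<delta>" and "S \<inter> J - T \<noteq> {}"
    using admissible_local_group[OF adm small] by blast
  have fin_T: "finite T" and fin_J: "finite J" using Tn Jn by (auto intro: finite_subset)
  have fin_A: "finite A" using AS fin_T finite_subset by blast
  have "card (S \<inter> J - T) \<le> card J" using fin_J by (intro card_mono) auto
  then have "card (S \<inter> J - T) \<le> r + (\<delta> - 1)" using card_J delta_ge_2 by linarith
  then obtain B P where BU: "B \<subseteq> S \<inter> J - T" and PU: "P \<subseteq> S \<inter> J - T - B"
    and erased: "card P + card B \<le> \<delta> - 1" and "0 < card B" and bound: "card A + card B \<le> (\<delta> - 1) * k"
    and count_step: "card A + r * (card A div (\<delta> - 1)) + (card (S \<inter> J - T) - card P)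
      \<le> (card A + card B) + r * ((card A + card B) div (\<delta> - 1))"
    using erasure_choice[OF _ \<open>S \<inter> J - T \<noteq> {}\<close> _ _ small] fin_J delta_ge_2 by auto
  have fin_B: "finite B" and fin_P: "finite P" using BU PU fin_J by (auto intro: finite_subset)
  have "B \<inter> T = {}" using BU by blast
  then have card_AB: "card (A \<union> B) = card A + card B"
    using AS fin_A fin_B by (intro card_Un_disjoint) auto
  have "card (S \<inter> (T \<union> (J - P))) = card (S \<inter> T) + (card (S \<inter> J - T) - card P)"
    using PU by (intro card_Int_Un_Diff[OF fin_T fin_J]) blast
  then have count': "card (S \<inter> (T \<union> (J - P))) \<le> card (A \<union> B) + r * (card (A \<union> B) div (\<delta> - 1))"
    using count count_step unfolding card_AB by linarith
  have "card (P \<union> B) < \<delta>" using card_Un_le[of P B] erased delta_ge_2 by linarith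
  then have "determined_by C (J - (P \<union> B)) J"
    using local_code fin_P fin_B by (intro min_dist_ge_corrects_erasures) auto
  then have "determined_by C ((T \<union> (J - P)) - (A \<union> B)) (T \<union> (J - P))"
    using det AS \<open>B \<inter> T = {}\<close> by (intro determined_by_extend) auto
  moreover have "A \<union> B \<subseteq> S \<inter> (T \<union> (J - P))" using AS BU PU by blast
  moreover have "T \<union> (J - P) \<subseteq> {1..n}" using Tn Jn by blast
  moreover have "card (A \<union> B) \<le> (\<delta> - 1) * k" using card_AB bound by simp
  ultimately have "admissible (A \<union> B) (T \<union> (J - P))"
    unfolding admissible_def using count' by (intro conjI)
  moreover have "card A < card (A \<union> B)" using card_AB \<open>0 < card B\<close> by simp
  ultimately show thesis by (rule that)
qed

lemma admissible_exists: "\<exists>A T. admissible A T \<and> card A = (\<delta> - 1) * k"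
proof -
  have "\<exists>A T. admissible A T \<and> j \<le> card A" if "j \<le> (\<delta> - 1) * k" for j
    using that
  proof (induction j)
    case 0
    then show ?case using admissible_empty by blast
  next
    case (Suc j)
    then obtain A T where adm: "admissible A T" and "j \<le> card A" by auto
    show ?case
    proof (cases "Suc j \<le> card A")
      case False
      then have "card A < (\<delta> - 1) * k" using Suc.prems \<open>j \<le> card A\<close> by simp
      then obtain A' T' where "admissible A' T'" "card A < card A'"
        using admissible_step[OF adm] by blast
      then show ?thesis using \<open>j \<le> card A\<close> by (intro exI[of _ A'] exI[of _ T']) simp
    qed (use adm in blast)
  qed
  then obtain A T where "admissible A T" and "(\<delta> - 1) * k \<le> card A" by blast
  moreover from this have "card A \<le> (\<delta> - 1) * k" unfolding admissible_def by blast
  ultimately show ?thesis by (intro exI conjI) auto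
qed

end

theorem mainTheorem2:
  fixes C :: "(nat \<Rightarrow> 'a::{field,finite}) set"
    and n r \<delta> \<Delta> :: nat and S :: "nat set"
  assumes "is_code n C"
    and "r \<ge> 1" and "\<delta> \<ge> 2"
    and "has_locality n C r \<delta>"
    and "S \<subseteq> {1..n}"
    and "\<Delta> > 0" and "\<Delta> \<le> card S"
  shows "\<exists>A T. A \<subseteq> {1..n} \<and> T \<subseteq> {1..n} \<and> A \<subseteq> S \<inter> T \<and>
           card A = (\<delta> - 1) * (\<Delta> div (r + \<delta> - 1)) \<and>
           card (S \<inter> T) \<le> \<Delta> \<and>
           (\<exists>\<psi>. \<forall>c\<in>C. restrict c T = \<psi> (restrict c (T - A)))"
proof -
  define k where "k = \<Delta> div (r + \<delta> - 1)"
  have k_budget: "(r + \<delta> - 1) * k \<le> \<Delta>" unfolding k_def by (rule times_div_less_eq_dividend)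
  interpret greedy_erasure n C r \<delta> k S
    using assms(3-5,7) k_budget by unfold_locales simp_all
  obtain A T where adm: "admissible A T" and card_A: "card A = (\<delta> - 1) * k"
    using admissible_exists by blast
  then have AST: "A \<subseteq> S \<inter> T" and Tn: "T \<subseteq> {1..n}" and det: "determined_by C (T - A) T"
    and count: "card (S \<inter> T) \<le> card A + r * (card A div (\<delta> - 1))"
    unfolding admissible_def by auto
  have "card A div (\<delta> - 1) = k" using card_A assms(3) by simp
  then have "card (S \<inter> T) \<le> (r + \<delta> - 1) * k" using count card_A assms(3) by (simp add: algebra_simps)
  then have "card (S \<inter> T) \<le> \<Delta>" using k_budget by linarith
  moreover have "A \<subseteq> {1..n}" using AST Tn by blast
  moreover obtain \<psi> where "\<forall>c\<in>C. restrict c T = \<psi> (restrict c (T - A))"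
    using determined_by_imp_restrict_fun[OF det] by blast
  ultimately show ?thesis using AST Tn card_A unfolding k_def by blast
qed

end
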